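(* Let $F_1,\dots,F_n:\mathbb{R}^d\to\mathbb{R}^d$, $F=\frac1n\sum_iF_i$ be $L$-Lipschitz, let $x^*$ satisfy $F(x^* )=0$, and let $g$ be an unbiased random estimator of $F$ ($\mathbb{E}[g(x)]=F(x)$ for all $x$). Consider the following conditions (each required for all $x\in\mathbb{R}^d$, with some constants): (1) Bounded operator: $\mathbb{E}\|g(x)\|^2\le\sigma^2$; (2) Bounded variance: $\mathbb{E}\|g(x)-F(x)\|^2\le\sigma^2$; (3) Growth condition: $\mathbb{E}\|g(x)\|^2\le\alpha\|F(x)\|^2+\beta$; (4) Expected co-coercivity: $\mathbb{E}\|g(x)-g(x^* )\|^2\le l_F\langle F(x),x-x^*\rangle$; (5) Expected Residual: $\mathbb{E}\|(g(x)-g(x^* ))-(F(x)-F(x^* ))\|^2\le\frac{\delta}{2}\|x-x^*\|^2$; (6) $\mathbb{E}\|g(x)\|^2\le\delta\|x-x^*\|^2+\|F(x)\|^2+2\sigma_*^2$; (7) $g(x)=\frac1n\sum_iv_iF_i(x)$ for a sampling vector $v$ and each $F_i$ is $L_i$-Lipschitz. Then (1)$\Rightarrow$(2)$\Rightarrow$(3)$\Rightarrow$(6), (7)$\Rightarrow$(5), (4)$\Rightarrow$(5), and (5)$\Rightarrow$(6) (the last one when $\mathbb{E}\|g(x^* )\|^2<\infty$), where each implication means that if the first condition holds with some constants then the second holds with some (finite, nonnegative) constants.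
   Context: A sampling vector is a random $v\in\mathbb{R}^n_+$ with $\mathbb{E}[v_i]=1$ for all $i$. $L$-Lipschitz means $\|F(x)-F(y)\|\le L\|x-y\|$.
   Formalization: In (7) each component $v_i$ of the sampling vector v also has a finite second moment, besides nonnegativity and $\mathbb{E}[v_i]=1$. The statement above fails without it. *)

theory Defs
  imports "HOL-Probability.Probability"
begin

text \<open>Second moment E||X||^2 of a random vector, as an extended nonnegative real
  (so that it may be infinite).\<close>
definition Esq :: "'w measure \<Rightarrow> ('w \<Rightarrow> 'a::real_normed_vector) \<Rightarrow> ennreal" where
  "Esq M X = (\<integral>\<^sup>+ \<omega>. ennreal ((norm (X \<omega>))\<^sup>2) \<partial>M)"

definition bounded_operator :: "'w measure \<Rightarrow> ('w \<Rightarrow> 'a::real_normed_vector \<Rightarrow> 'a) \<Rightarrow> bool" where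
  "bounded_operator M g \<longleftrightarrow> (\<exists>\<sigma>::real. \<forall>x. Esq M (\<lambda>\<omega>. g \<omega> x) \<le> ennreal (\<sigma>\<^sup>2))"

definition bounded_variance :: "'w measure \<Rightarrow> ('w \<Rightarrow> 'a::real_normed_vector \<Rightarrow> 'a) \<Rightarrow> ('a \<Rightarrow> 'a) \<Rightarrow> bool" where
  "bounded_variance M g F \<longleftrightarrow> (\<exists>\<sigma>::real. \<forall>x. Esq M (\<lambda>\<omega>. g \<omega> x - F x) \<le> ennreal (\<sigma>\<^sup>2))"

definition growth_condition :: "'w measure \<Rightarrow> ('w \<Rightarrow> 'a::real_normed_vector \<Rightarrow> 'a) \<Rightarrow> ('a \<Rightarrow> 'a) \<Rightarrow> bool" where
  "growth_condition M g F \<longleftrightarrow> (\<exists>\<alpha> \<beta>::real. 0 \<le> \<alpha> \<and> 0 \<le> \<beta> \<and>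
     (\<forall>x. Esq M (\<lambda>\<omega>. g \<omega> x) \<le> ennreal (\<alpha> * (norm (F x))\<^sup>2 + \<beta>)))"

text \<open>(4) Expected co-coercivity.  The real inequality E||.||^2 <= r (with E||.||^2 in [0,oo])
  is rendered as 0 <= r and E||.||^2 <= ennreal r.\<close>
definition expected_cocoercive :: "'w measure \<Rightarrow> ('w \<Rightarrow> 'a::real_inner \<Rightarrow> 'a) \<Rightarrow> ('a \<Rightarrow> 'a) \<Rightarrow> 'a \<Rightarrow> bool" where
  "expected_cocoercive M g F xs \<longleftrightarrow> (\<exists>l::real. 0 \<le> l \<and>
     (\<forall>x. 0 \<le> l * inner (F x) (x - xs) \<and>
          Esq M (\<lambda>\<omega>. g \<omega> x - g \<omega> xs) \<le> ennreal (l * inner (F x) (x - xs))))"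

definition expected_residual :: "'w measure \<Rightarrow> ('w \<Rightarrow> 'a::real_normed_vector \<Rightarrow> 'a) \<Rightarrow> ('a \<Rightarrow> 'a) \<Rightarrow> 'a \<Rightarrow> bool" where
  "expected_residual M g F xs \<longleftrightarrow> (\<exists>\<delta>::real. 0 \<le> \<delta> \<and>
     (\<forall>x. Esq M (\<lambda>\<omega>. (g \<omega> x - g \<omega> xs) - (F x - F xs)) \<le> ennreal (\<delta> / 2 * (norm (x - xs))\<^sup>2)))"

definition condition6 :: "'w measure \<Rightarrow> ('w \<Rightarrow> 'a::real_normed_vector \<Rightarrow> 'a) \<Rightarrow> ('a \<Rightarrow> 'a) \<Rightarrow> 'a \<Rightarrow> bool" where
  "condition6 M g F xs \<longleftrightarrow> (\<exists>\<delta> \<sigma>s::real. 0 \<le> \<delta> \<and>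
     (\<forall>x. Esq M (\<lambda>\<omega>. g \<omega> x) \<le> ennreal (\<delta> * (norm (x - xs))\<^sup>2 + (norm (F x))\<^sup>2 + 2 * \<sigma>s\<^sup>2)))"

definition sampling_vector :: "'w measure \<Rightarrow> nat \<Rightarrow> ('w \<Rightarrow> nat \<Rightarrow> real) \<Rightarrow> bool" where
  "sampling_vector M n v \<longleftrightarrow> (\<forall>i<n. integrable M (\<lambda>\<omega>. v \<omega> i) \<and>
     (AE \<omega> in M. 0 \<le> v \<omega> i) \<and> integral\<^sup>L M (\<lambda>\<omega>. v \<omega> i) = 1)"

text \<open>(7) Arbitrary sampling; the sampling vector is additionally required to have finite
  second moments.\<close>
definition arbitrary_sampling :: "'w measure \<Rightarrow> ('w \<Rightarrow> 'a::real_normed_vector \<Rightarrow> 'a) \<Rightarrow> nat \<Rightarrow> (nat \<Rightarrow> 'a \<Rightarrow> 'a) \<Rightarrow> bool" where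
  "arbitrary_sampling M g n Fs \<longleftrightarrow> (\<exists>(v::'w \<Rightarrow> nat \<Rightarrow> real) (Ls::nat \<Rightarrow> real). sampling_vector M n v \<and>
     (\<forall>i<n. integrable M (\<lambda>\<omega>. (v \<omega> i)\<^sup>2)) \<and>
     (\<forall>x. AE \<omega> in M. g \<omega> x = (1 / real n) *\<^sub>R (\<Sum>i<n. v \<omega> i *\<^sub>R Fs i x)) \<and>
     (\<forall>i<n. lipschitz_on (Ls i) UNIV (Fs i)))"

end

theory Submission
  imports Defs
begin

text \<open>Most implications are the inequality \<open>\<parallel>a + b\<parallel>\<^sup>2 \<le> 2\<parallel>a\<parallel>\<^sup>2 + 2\<parallel>b\<parallel>\<^sup>2\<close> integrated
  against \<open>M\<close>, combined with the bound \<open>\<parallel>F x\<parallel> \<le> L\<parallel>x - x\<^sup>*\<parallel>\<close> that Lipschitz continuity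
  gives at the zero \<open>x\<^sup>*\<close> of \<open>F\<close>.  For (1) \<open>\<Rightarrow>\<close> (2) the mean \<open>F x = E g(x)\<close> is bounded
  because \<open>\<parallel>g\<parallel> \<le> (1 + \<parallel>g\<parallel>\<^sup>2)/2\<close>.  For (7) \<open>\<Rightarrow>\<close> (5) the residual is the average
  \<open>(1/n) \<Sum>\<^sub>i (v\<^sub>i - 1)(F\<^sub>i x - F\<^sub>i x\<^sup>*)\<close>, so by convexity of \<open>\<parallel>\<cdot>\<parallel>\<^sup>2\<close> its second moment is at
  most \<open>(1/n) \<Sum>\<^sub>i L\<^sub>i\<^sup>2 Var(v\<^sub>i) \<parallel>x - x\<^sup>*\<parallel>\<^sup>2\<close>.\<close>

lemma norm_add_squared_le:
  fixes a b :: "'a::real_normed_vector"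
  shows "(norm (a + b))\<^sup>2 \<le> 2 * (norm a)\<^sup>2 + 2 * (norm b)\<^sup>2"
proof -
  have "(norm (a + b))\<^sup>2 \<le> (norm a + norm b)\<^sup>2"
    by (rule power_mono[OF norm_triangle_ineq]) simp
  moreover have "0 \<le> (norm a - norm b)\<^sup>2" by simp
  ultimately show ?thesis by (simp add: power2_sum power2_diff)
qed

lemma norm_mean_squared_le:
  fixes a :: "nat \<Rightarrow> 'a::real_normed_vector"
  shows "(norm ((1 / real n) *\<^sub>R (\<Sum>i<n. a i)))\<^sup>2 \<le> (1 / real n) * (\<Sum>i<n. (norm (a i))\<^sup>2)"
proof -
  have "(norm (\<Sum>i<n. a i))\<^sup>2 \<le> (\<Sum>i<n. norm (a i))\<^sup>2"
    by (rule power_mono[OF norm_sum]) simp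
  also have "\<dots> \<le> (\<Sum>i<n. (norm (a i))\<^sup>2) * real n"
    using sum_squared_le_sum_of_squares[of "\<lambda>i. norm (a i)" "{..<n}"] by simp
  finally have "(1 / real n)\<^sup>2 * (norm (\<Sum>i<n. a i))\<^sup>2 \<le> (1 / real n)\<^sup>2 * ((\<Sum>i<n. (norm (a i))\<^sup>2) * real n)"
    by (rule mult_left_mono) simp
  then show ?thesis
    by (cases "n = 0") (simp_all add: power_mult_distrib power2_eq_square)
qed

lemma lipschitz_on_norm_le:
  assumes "lipschitz_on L UNIV F" and "F xs = 0"
  shows "norm (F x) \<le> L * norm (x - xs)"
  using lipschitz_onD[OF assms(1), of x xs] assms(2) by (simp add: dist_norm)

lemma lipschitz_on_norm_squared_le:
  assumes "lipschitz_on L UNIV F" and "F xs = 0"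
  shows "(norm (F x))\<^sup>2 \<le> L\<^sup>2 * (norm (x - xs))\<^sup>2"
proof -
  have "(norm (F x))\<^sup>2 \<le> (L * norm (x - xs))\<^sup>2"
    by (rule power_mono[OF lipschitz_on_norm_le[OF assms]]) simp
  then show ?thesis by (simp add: power_mult_distrib)
qed

lemma Esq_cong_AE:
  assumes "AE \<omega> in M. X \<omega> = Y \<omega>"
  shows "Esq M X = Esq M Y"
  unfolding Esq_def using assms by (intro nn_integral_cong_AE) auto

lemma Esq_const:
  assumes "prob_space M"
  shows "Esq M (\<lambda>_. c) = ennreal ((norm c)\<^sup>2)"
  using assms by (simp add: Esq_def prob_space.emeasure_space_1)

lemma Esq_add_le:
  fixes X Y :: "'w \<Rightarrow> 'a::{real_normed_vector, second_countable_topology}"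
  assumes [measurable]: "X \<in> borel_measurable M" "Y \<in> borel_measurable M"
    and "Esq M X \<le> ennreal r" "Esq M Y \<le> ennreal s" "0 \<le> r" "0 \<le> s"
  shows "Esq M (\<lambda>\<omega>. X \<omega> + Y \<omega>) \<le> ennreal (2 * r + 2 * s)"
proof -
  have "Esq M (\<lambda>\<omega>. X \<omega> + Y \<omega>)
      \<le> (\<integral>\<^sup>+\<omega>. 2 * ennreal ((norm (X \<omega>))\<^sup>2) + 2 * ennreal ((norm (Y \<omega>))\<^sup>2) \<partial>M)"
    unfolding Esq_def
  proof (rule nn_integral_mono)
    fix \<omega>
    show "ennreal ((norm (X \<omega> + Y \<omega>))\<^sup>2) \<le> 2 * ennreal ((norm (X \<omega>))\<^sup>2) + 2 * ennreal ((norm (Y \<omega>))\<^sup>2)"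
      using ennreal_leI[OF norm_add_squared_le[of "X \<omega>" "Y \<omega>"]]
      by (simp add: ennreal_plus ennreal_mult)
  qed
  also have "\<dots> = 2 * Esq M X + 2 * Esq M Y"
    by (simp add: Esq_def nn_integral_add nn_integral_cmult)
  also have "\<dots> \<le> 2 * ennreal r + 2 * ennreal s"
    using assms(3,4) by (intro add_mono mult_left_mono) auto
  also have "\<dots> = ennreal (2 * r + 2 * s)"
    using assms(5,6) by (simp add: ennreal_plus ennreal_mult)
  finally show ?thesis .
qed

lemma Esq_add_const_le:
  fixes X :: "'w \<Rightarrow> 'a::{real_normed_vector, second_countable_topology}"
  assumes "prob_space M" "X \<in> borel_measurable M" "Esq M X \<le> ennreal r" "0 \<le> r"
  shows "Esq M (\<lambda>\<omega>. X \<omega> + c) \<le> ennreal (2 * r + 2 * (norm c)\<^sup>2)"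
  using assms by (intro Esq_add_le) (simp_all add: Esq_const)

text \<open>Pointwise \<open>\<parallel>f\<parallel> \<le> (1 + \<parallel>f\<parallel>\<^sup>2)/2\<close>; this avoids having to know that \<open>\<parallel>f\<parallel>\<^sup>2\<close> is integrable.\<close>
lemma norm_integral_le_Esq:
  fixes f :: "'w \<Rightarrow> 'a::{banach, second_countable_topology}"
  assumes "prob_space M" "integrable M f" "Esq M f \<le> ennreal r" "0 \<le> r"
  shows "norm (integral\<^sup>L M f) \<le> (1 + r) / 2"
proof -
  interpret prob_space M by fact
  have [measurable]: "f \<in> borel_measurable M" using assms(2) by auto
  have "ennreal (2 * norm (integral\<^sup>L M f)) = 2 * ennreal (norm (integral\<^sup>L M f))"
    by (simp add: ennreal_mult)
  also have "\<dots> \<le> 2 * (\<integral>\<^sup>+\<omega>. norm (f \<omega>) \<partial>M)"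
    by (intro mult_left_mono integral_norm_bound_ennreal[OF assms(2)]) simp
  also have "\<dots> = (\<integral>\<^sup>+\<omega>. ennreal (2 * norm (f \<omega>)) \<partial>M)"
    by (simp add: nn_integral_cmult ennreal_mult)
  also have "\<dots> \<le> (\<integral>\<^sup>+\<omega>. 1 + ennreal ((norm (f \<omega>))\<^sup>2) \<partial>M)"
  proof (rule nn_integral_mono)
    fix \<omega>
    have "2 * norm (f \<omega>) \<le> 1 + (norm (f \<omega>))\<^sup>2"
      using zero_le_power2[of "norm (f \<omega>) - 1"] by (simp add: power2_diff)
    then show "ennreal (2 * norm (f \<omega>)) \<le> 1 + ennreal ((norm (f \<omega>))\<^sup>2)"
      by (metis ennreal_1 ennreal_leI ennreal_plus zero_le_one zero_le_power2)
  qed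
  also have "\<dots> = 1 + Esq M f"
    by (simp add: nn_integral_add Esq_def emeasure_space_1)
  also have "\<dots> \<le> ennreal (1 + r)"
    using assms(3,4) by (simp add: ennreal_plus add_left_mono)
  finally have "2 * norm (integral\<^sup>L M f) \<le> 1 + r"
    using assms(4) by (subst (asm) ennreal_le_iff) auto
  then show ?thesis by simp
qed

lemma bounded_operator_imp_bounded_variance:
  fixes g :: "'w \<Rightarrow> 'a::{banach, second_countable_topology} \<Rightarrow> 'a"
  assumes "prob_space M" and "\<And>x. integrable M (\<lambda>\<omega>. g \<omega> x)"
    and "\<And>x. integral\<^sup>L M (\<lambda>\<omega>. g \<omega> x) = F x"
    and "bounded_operator M g"
  shows "bounded_variance M g F"
proof -
  obtain \<sigma> where \<sigma>: "\<And>x. Esq M (\<lambda>\<omega>. g \<omega> x) \<le> ennreal (\<sigma>\<^sup>2)"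
    using assms(4) unfolding bounded_operator_def by blast
  define C where "C = (1 + \<sigma>\<^sup>2) / 2"
  have "Esq M (\<lambda>\<omega>. g \<omega> x - F x) \<le> ennreal ((sqrt (2 * \<sigma>\<^sup>2 + 2 * C\<^sup>2))\<^sup>2)" for x
  proof -
    have "norm (F x) \<le> C"
      using norm_integral_le_Esq[OF assms(1,2) \<sigma>] assms(3) by (simp add: C_def)
    then have F_le: "(norm (F x))\<^sup>2 \<le> C\<^sup>2"
      by (simp add: power_mono)
    have "Esq M (\<lambda>\<omega>. g \<omega> x - F x) \<le> ennreal (2 * \<sigma>\<^sup>2 + 2 * (norm (- F x))\<^sup>2)"
      using Esq_add_const_le[OF assms(1) _ \<sigma>, of x "- F x"] assms(2) by simp
    also have "\<dots> \<le> ennreal (2 * \<sigma>\<^sup>2 + 2 * C\<^sup>2)"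
      using F_le by (intro ennreal_leI) simp
    finally show ?thesis by simp
  qed
  then show ?thesis
    unfolding bounded_variance_def by blast
qed

lemma bounded_variance_imp_growth_condition:
  fixes g :: "'w \<Rightarrow> 'a::{real_normed_vector, second_countable_topology} \<Rightarrow> 'a"
  assumes "prob_space M" and "\<And>x. (\<lambda>\<omega>. g \<omega> x) \<in> borel_measurable M"
    and "bounded_variance M g F"
  shows "growth_condition M g F"
proof -
  obtain \<sigma> where \<sigma>: "\<And>x. Esq M (\<lambda>\<omega>. g \<omega> x - F x) \<le> ennreal (\<sigma>\<^sup>2)"
    using assms(3) unfolding bounded_variance_def by blast
  have "Esq M (\<lambda>\<omega>. g \<omega> x) \<le> ennreal (2 * (norm (F x))\<^sup>2 + 2 * \<sigma>\<^sup>2)" for x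
    using Esq_add_const_le[OF assms(1) _ \<sigma>, of x "F x"] assms(2) by (simp add: add.commute)
  then show ?thesis
    unfolding growth_condition_def by (intro exI[of _ 2] exI[of _ "2 * \<sigma>\<^sup>2"]) auto
qed

lemma growth_condition_imp_condition6:
  assumes "lipschitz_on L UNIV F" and "F xs = 0"
    and "growth_condition M g F"
  shows "condition6 M g F xs"
proof -
  obtain \<alpha> \<beta> where "0 \<le> \<alpha>" "0 \<le> \<beta>"
    and growth: "\<And>x. Esq M (\<lambda>\<omega>. g \<omega> x) \<le> ennreal (\<alpha> * (norm (F x))\<^sup>2 + \<beta>)"
    using assms(3) unfolding growth_condition_def by blast
  define \<delta> where "\<delta> = max (\<alpha> - 1) 0 * L\<^sup>2"
  have "\<alpha> * (norm (F x))\<^sup>2 + \<beta> \<le> \<delta> * (norm (x - xs))\<^sup>2 + (norm (F x))\<^sup>2 + 2 * (sqrt (\<beta> / 2))\<^sup>2"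
    for x
  proof -
    have "\<alpha> * (norm (F x))\<^sup>2 \<le> (norm (F x))\<^sup>2 + max (\<alpha> - 1) 0 * (norm (F x))\<^sup>2"
      using mult_right_mono[of \<alpha> "1 + max (\<alpha> - 1) 0" "(norm (F x))\<^sup>2"] by (simp add: algebra_simps)
    also have "\<dots> \<le> (norm (F x))\<^sup>2 + max (\<alpha> - 1) 0 * (L\<^sup>2 * (norm (x - xs))\<^sup>2)"
      using lipschitz_on_norm_squared_le[OF assms(1,2)] by (intro add_left_mono mult_left_mono) auto
    finally show ?thesis
      using \<open>0 \<le> \<beta>\<close> by (simp add: \<delta>_def algebra_simps)
  qed
  then have "Esq M (\<lambda>\<omega>. g \<omega> x) \<le> ennreal (\<delta> * (norm (x - xs))\<^sup>2 + (norm (F x))\<^sup>2 + 2 * (sqrt (\<beta> / 2))\<^sup>2)"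
    for x
    using growth order_trans ennreal_leI by blast
  moreover have "0 \<le> \<delta>" by (simp add: \<delta>_def)
  ultimately show ?thesis
    unfolding condition6_def by blast
qed

lemma expected_cocoercive_imp_expected_residual:
  fixes g :: "'w \<Rightarrow> 'a::{real_inner, second_countable_topology} \<Rightarrow> 'a"
  assumes "prob_space M" and [measurable]: "\<And>x. (\<lambda>\<omega>. g \<omega> x) \<in> borel_measurable M"
    and "lipschitz_on L UNIV F" and "F xs = 0"
    and "expected_cocoercive M g F xs"
  shows "expected_residual M g F xs"
proof -
  obtain l where "0 \<le> l" and cocoercive: "\<And>x. 0 \<le> l * inner (F x) (x - xs) \<and>
      Esq M (\<lambda>\<omega>. g \<omega> x - g \<omega> xs) \<le> ennreal (l * inner (F x) (x - xs))"
    using assms(5) unfolding expected_cocoercive_def by blast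
  have "0 \<le> L" using assms(3) by (rule lipschitz_on_nonneg)
  define \<delta> where "\<delta> = 4 * (l * L + L\<^sup>2)"
  have "Esq M (\<lambda>\<omega>. g \<omega> x - g \<omega> xs - (F x - F xs)) \<le> ennreal (\<delta> / 2 * (norm (x - xs))\<^sup>2)" for x
  proof -
    have "inner (F x) (x - xs) \<le> norm (F x) * norm (x - xs)"
      by (rule norm_cauchy_schwarz)
    also have "\<dots> \<le> L * norm (x - xs) * norm (x - xs)"
      using lipschitz_on_norm_le[OF assms(3,4)] by (rule mult_right_mono) simp
    finally have "l * inner (F x) (x - xs) \<le> l * (L * (norm (x - xs))\<^sup>2)"
      using \<open>0 \<le> l\<close> by (simp add: mult_left_mono power2_eq_square mult.assoc)
    moreover have "(norm (F x))\<^sup>2 \<le> L\<^sup>2 * (norm (x - xs))\<^sup>2"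
      by (rule lipschitz_on_norm_squared_le[OF assms(3,4)])
    moreover have "Esq M (\<lambda>\<omega>. g \<omega> x - g \<omega> xs - (F x - F xs))
        \<le> ennreal (2 * (l * inner (F x) (x - xs)) + 2 * (norm (- F x))\<^sup>2)"
      using Esq_add_const_le[OF assms(1) _ conjunct2[OF cocoercive] conjunct1[OF cocoercive],
          of x "- F x"]
      by (simp add: assms(4))
    ultimately show ?thesis
      by (elim order_trans, intro ennreal_leI) (simp add: \<delta>_def algebra_simps)
  qed
  moreover have "0 \<le> \<delta>"
    using \<open>0 \<le> l\<close> \<open>0 \<le> L\<close> by (simp add: \<delta>_def)
  ultimately show ?thesis
    unfolding expected_residual_def by blast
qed

lemma expected_residual_imp_condition6:
  fixes g :: "'w \<Rightarrow> 'a::{real_normed_vector, second_countable_topology} \<Rightarrow> 'a"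
  assumes "prob_space M" and [measurable]: "\<And>x. (\<lambda>\<omega>. g \<omega> x) \<in> borel_measurable M"
    and "lipschitz_on L UNIV F" and "F xs = 0"
    and "expected_residual M g F xs" and "Esq M (\<lambda>\<omega>. g \<omega> xs) < \<infinity>"
  shows "condition6 M g F xs"
proof -
  obtain \<delta> where "0 \<le> \<delta>" and residual:
      "\<And>x. Esq M (\<lambda>\<omega>. g \<omega> x - g \<omega> xs - (F x - F xs)) \<le> ennreal (\<delta> / 2 * (norm (x - xs))\<^sup>2)"
    using assms(5) unfolding expected_residual_def by blast
  define S where "S = enn2real (Esq M (\<lambda>\<omega>. g \<omega> xs))"
  have S: "Esq M (\<lambda>\<omega>. g \<omega> xs) \<le> ennreal S" "0 \<le> S"
    using assms(6) by (simp_all add: S_def)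
  define \<delta>' where "\<delta>' = 2 * \<delta> + L\<^sup>2"
  have "Esq M (\<lambda>\<omega>. g \<omega> x) \<le> ennreal (\<delta>' * (norm (x - xs))\<^sup>2 + (norm (F x))\<^sup>2 + 2 * (sqrt (2 * S))\<^sup>2)"
    for x
  proof -
    have "Esq M (\<lambda>\<omega>. g \<omega> x) = Esq M (\<lambda>\<omega>. (g \<omega> x - g \<omega> xs - (F x - F xs) + g \<omega> xs) + F x)"
      by (simp add: assms(4))
    also have "\<dots> \<le> ennreal (2 * (2 * (\<delta> / 2 * (norm (x - xs))\<^sup>2) + 2 * S) + 2 * (norm (F x))\<^sup>2)"
      using \<open>0 \<le> \<delta>\<close> S by (intro Esq_add_const_le Esq_add_le residual assms(1)) simp_all
    also have "\<dots> \<le> ennreal (\<delta>' * (norm (x - xs))\<^sup>2 + (norm (F x))\<^sup>2 + 2 * (sqrt (2 * S))\<^sup>2)"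
      using lipschitz_on_norm_squared_le[OF assms(3,4), of x] \<open>0 \<le> S\<close>
      by (intro ennreal_leI) (simp add: \<delta>'_def algebra_simps)
    finally show ?thesis .
  qed
  moreover have "0 \<le> \<delta>'"
    using \<open>0 \<le> \<delta>\<close> by (simp add: \<delta>'_def)
  ultimately show ?thesis
    unfolding condition6_def by blast
qed

lemma weighted_mean_residual_eq:
  fixes Fs :: "nat \<Rightarrow> 'a \<Rightarrow> 'a::real_vector"
  shows "(c *\<^sub>R (\<Sum>i<n. v i *\<^sub>R Fs i x) - c *\<^sub>R (\<Sum>i<n. v i *\<^sub>R Fs i y))
      - (c *\<^sub>R (\<Sum>i<n. Fs i x) - c *\<^sub>R (\<Sum>i<n. Fs i y))
    = c *\<^sub>R (\<Sum>i<n. (v i - 1) *\<^sub>R (Fs i x - Fs i y))"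
  by (simp add: scaleR_diff_right scaleR_diff_left sum_subtractf sum.distrib scaleR_add_right
      algebra_simps)

lemma norm_weighted_mean_residual_squared_le:
  fixes Fs :: "nat \<Rightarrow> 'a \<Rightarrow> 'a::real_normed_vector"
  assumes "\<forall>i<n. lipschitz_on (Ls i) UNIV (Fs i)"
  shows "(norm ((1 / real n) *\<^sub>R (\<Sum>i<n. (v i - 1) *\<^sub>R (Fs i x - Fs i y))))\<^sup>2
    \<le> (1 / real n) * (\<Sum>i<n. (Ls i)\<^sup>2 * (v i - 1)\<^sup>2) * (norm (x - y))\<^sup>2"
proof -
  have summand_le: "(norm ((v i - 1) *\<^sub>R (Fs i x - Fs i y)))\<^sup>2
      \<le> (Ls i)\<^sup>2 * (v i - 1)\<^sup>2 * (norm (x - y))\<^sup>2" if "i < n" for i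
  proof -
    have "norm (Fs i x - Fs i y) \<le> Ls i * norm (x - y)"
      using lipschitz_onD[of "Ls i" UNIV "Fs i" x y] assms that by (simp add: dist_norm)
    then have "(norm (Fs i x - Fs i y))\<^sup>2 \<le> (Ls i)\<^sup>2 * (norm (x - y))\<^sup>2"
      using power_mono[of _ _ 2] by (fastforce simp: power_mult_distrib)
    then have "(v i - 1)\<^sup>2 * (norm (Fs i x - Fs i y))\<^sup>2 \<le> (v i - 1)\<^sup>2 * ((Ls i)\<^sup>2 * (norm (x - y))\<^sup>2)"
      by (rule mult_left_mono) simp
    then show ?thesis
      by (simp add: power_mult_distrib mult.commute mult.left_commute)
  qed
  have "(\<Sum>i<n. (norm ((v i - 1) *\<^sub>R (Fs i x - Fs i y)))\<^sup>2)
      \<le> (\<Sum>i<n. (Ls i)\<^sup>2 * (v i - 1)\<^sup>2) * (norm (x - y))\<^sup>2"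
    unfolding sum_distrib_right by (intro sum_mono summand_le) simp
  then have "(1 / real n) * (\<Sum>i<n. (norm ((v i - 1) *\<^sub>R (Fs i x - Fs i y)))\<^sup>2)
      \<le> (1 / real n) * ((\<Sum>i<n. (Ls i)\<^sup>2 * (v i - 1)\<^sup>2) * (norm (x - y))\<^sup>2)"
    by (rule mult_left_mono) simp
  with norm_mean_squared_le show ?thesis
    by (simp only: mult.assoc) (rule order_trans)
qed

lemma arbitrary_sampling_imp_expected_residual:
  fixes g :: "'w \<Rightarrow> 'a::real_normed_vector \<Rightarrow> 'a"
  assumes "prob_space M" and F: "F = (\<lambda>x. (1 / real n) *\<^sub>R (\<Sum>i<n. Fs i x))"
    and "arbitrary_sampling M g n Fs"
  shows "expected_residual M g F xs"
proof -
  interpret prob_space M by fact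
  obtain v Ls where "sampling_vector M n v" and v_sq: "\<forall>i<n. integrable M (\<lambda>\<omega>. (v \<omega> i)\<^sup>2)"
    and g: "\<forall>x. AE \<omega> in M. g \<omega> x = (1 / real n) *\<^sub>R (\<Sum>i<n. v \<omega> i *\<^sub>R Fs i x)"
    and lip: "\<forall>i<n. lipschitz_on (Ls i) UNIV (Fs i)"
    using assms(3) unfolding arbitrary_sampling_def by blast
  then have v: "integrable M (\<lambda>\<omega>. v \<omega> i)" "expectation (\<lambda>\<omega>. v \<omega> i) = 1" if "i < n" for i
    using that unfolding sampling_vector_def by auto
  have v_centered_sq: "integrable M (\<lambda>\<omega>. (v \<omega> i - 1)\<^sup>2)" if "i < n" for i
  proof -
    have "(\<lambda>\<omega>. (v \<omega> i - 1)\<^sup>2) = (\<lambda>\<omega>. (v \<omega> i)\<^sup>2 - 2 * v \<omega> i + 1)"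
      by (simp add: fun_eq_iff power2_diff)
    then show ?thesis
      using v(1)[OF that] v_sq that by auto
  qed
  define \<delta> where "\<delta> = 2 / real n * (\<Sum>i<n. (Ls i)\<^sup>2 * variance (\<lambda>\<omega>. v \<omega> i))"
  have "Esq M (\<lambda>\<omega>. g \<omega> x - g \<omega> xs - (F x - F xs)) \<le> ennreal (\<delta> / 2 * (norm (x - xs))\<^sup>2)" for x
  proof -
    let ?R = "\<lambda>\<omega>. (1 / real n) *\<^sub>R (\<Sum>i<n. (v \<omega> i - 1) *\<^sub>R (Fs i x - Fs i xs))"
    let ?B = "\<lambda>\<omega>. (1 / real n) * (\<Sum>i<n. (Ls i)\<^sup>2 * (v \<omega> i - 1)\<^sup>2) * (norm (x - xs))\<^sup>2"
    have "AE \<omega> in M. g \<omega> x - g \<omega> xs - (F x - F xs) = ?R \<omega>"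
      using g[rule_format, of x] g[rule_format, of xs]
      by eventually_elim (simp add: F weighted_mean_residual_eq)
    then have "Esq M (\<lambda>\<omega>. g \<omega> x - g \<omega> xs - (F x - F xs)) = Esq M ?R"
      by (rule Esq_cong_AE)
    also have "\<dots> \<le> (\<integral>\<^sup>+\<omega>. ennreal (?B \<omega>) \<partial>M)"
      unfolding Esq_def
      by (intro nn_integral_mono ennreal_leI norm_weighted_mean_residual_squared_le lip)
    also have "\<dots> = ennreal (expectation ?B)"
    proof (rule nn_integral_eq_integral)
      show "integrable M ?B"
        using v_centered_sq by (intro integrable_mult_left integrable_mult_right integrable_sum) auto
      show "AE \<omega> in M. 0 \<le> ?B \<omega>"
        by (intro AE_I2 mult_nonneg_nonneg sum_nonneg) auto
    qed
    also have "expectation ?B = \<delta> / 2 * (norm (x - xs))\<^sup>2"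
      using v v_centered_sq by (simp add: \<delta>_def integral_sum)
    finally show ?thesis .
  qed
  moreover have "0 \<le> \<delta>"
    unfolding \<delta>_def by (intro mult_nonneg_nonneg sum_nonneg variance_positive) auto
  ultimately show ?thesis
    unfolding expected_residual_def by blast
qed

theorem proposition3p4:
  fixes M :: "'w measure" and Fs :: "nat \<Rightarrow> 'a::euclidean_space \<Rightarrow> 'a" and F :: "'a \<Rightarrow> 'a"
    and g :: "'w \<Rightarrow> 'a \<Rightarrow> 'a" and n :: nat and L :: real and xs :: 'a
  assumes "prob_space M" and "n \<ge> 1"
    and "F = (\<lambda>x. (1 / real n) *\<^sub>R (\<Sum>i<n. Fs i x))"
    and "\<forall>i<n. lipschitz_on L UNIV (Fs i)" and "lipschitz_on L UNIV F"
    and "F xs = 0"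
    and "\<forall>x. integrable M (\<lambda>\<omega>. g \<omega> x)"
    and "\<forall>x. integral\<^sup>L M (\<lambda>\<omega>. g \<omega> x) = F x"
  shows "(bounded_operator M g \<longrightarrow> bounded_variance M g F)
       \<and> (bounded_variance M g F \<longrightarrow> growth_condition M g F)
       \<and> (growth_condition M g F \<longrightarrow> condition6 M g F xs)
       \<and> (arbitrary_sampling M g n Fs \<longrightarrow> expected_residual M g F xs)
       \<and> (expected_cocoercive M g F xs \<longrightarrow> expected_residual M g F xs)
       \<and> (expected_residual M g F xs \<and> Esq M (\<lambda>\<omega>. g \<omega> xs) < \<infinity> \<longrightarrow> condition6 M g F xs)"
proof -
  have integrable: "\<And>x. integrable M (\<lambda>\<omega>. g \<omega> x)"
    and mean: "\<And>x. integral\<^sup>L M (\<lambda>\<omega>. g \<omega> x) = F x"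
    using assms(7,8) by blast+
  have measurable: "\<And>x. (\<lambda>\<omega>. g \<omega> x) \<in> borel_measurable M"
    using integrable by (rule borel_measurable_integrable)
  show ?thesis
    using bounded_operator_imp_bounded_variance[where g = g, OF assms(1) integrable mean]
      bounded_variance_imp_growth_condition[where g = g, OF assms(1) measurable]
      growth_condition_imp_condition6[OF assms(5,6)]
      arbitrary_sampling_imp_expected_residual[OF assms(1,3)]
      expected_cocoercive_imp_expected_residual[where g = g, OF assms(1) measurable assms(5,6)]
      expected_residual_imp_condition6[where g = g, OF assms(1) measurable assms(5,6)]
    by blast
qed

end
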